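(* For every MSSP instance there exists an optimal autonomous profile, i.e. $\pi^*\in\Pi$ with $\mathbb{E}_{\pi^*}[\textit{MHit}]=\inf_{\pi\in\Pi}\mathbb{E}_\pi[\textit{MHit}]$, and for every $n\ge1$ there exists a $\Pi_n$-optimal profile, i.e. $\pi^*\in\Pi_n$ with $\mathbb{E}_{\pi^*}[\textit{MHit}]=\inf_{\pi\in\Pi_n}\mathbb{E}_\pi[\textit{MHit}]$.
   Context: An MDP is a triple $M=(S,\textit{Act},P)$ with finite sets $S$, $\textit{Act}$ and $P:S\times\textit{Act}\times S\to[0,1]$ such that for each $s$ the set $\textit{En}(s)$ of enabled actions (those $a$ with $\sum_t P(s,a,t)=1$) is nonempty. An MSSP instance consists of an MDP $M$, a number $k\ge1$ of agents, and for each agent $i$ an initial state $\iota_i\in S$ and target set $T_i\subseteq S$ with $\iota_i\notin T_i\neq\emptyset$. In the autonomous setting each agent $i$ uses its own strategy $\sigma_i$ in $M$ which depends only on agent $i$'s own history (not on the other agents); the strategy is given by a set $\mathit{Mem}_i$ of memory states, a (randomized) initial memory, a randomized rule choosing an enabled action from the current state and memory state, and a randomized rule updating the memory state; agents evolve independently, agent $i$ starting in $\iota_i$. A tuple $\pi=(\sigma_1,\dots,\sigma_k)$ is an (autonomous) profile; $\Pi$ is the class of all autonomous profiles and, for $n\ge1$, $\Pi_n$ is the class of profiles in which every $\mathit{Mem}_i$ has at most $n$ elements ($\Pi_1$ = memoryless profiles). $\textit{MHit}$ is the first time step at which some agent $i$ is in a state of $T_i$ ($\infty$ if never), and $\mathbb{E}_\pi[\textit{MHit}]$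 is its expectation under $\pi$. *)

theory Defs
  imports "HOL-Probability.Probability"
begin

(* An MDP over a finite state type 's and finite action type 'a is given by
   P :: 's => 'a => 's => real.  S = UNIV, Act = UNIV. *)

definition En :: "('s::finite \<Rightarrow> 'a \<Rightarrow> 's \<Rightarrow> real) \<Rightarrow> 's \<Rightarrow> 'a set" where
  "En P s = {a. (\<Sum>t\<in>UNIV. P s a t) = 1}"

definition is_MDP :: "('s::finite \<Rightarrow> 'a::finite \<Rightarrow> 's \<Rightarrow> real) \<Rightarrow> bool" where
  "is_MDP P \<longleftrightarrow> (\<forall>s a t. 0 \<le> P s a t \<and> P s a t \<le> 1) \<and> (\<forall>s. En P s \<noteq> {})"

(* successor distribution P(s,a,.) (meaningful for enabled a) *)
definition trans_pmf :: "('s::finite \<Rightarrow> 'a \<Rightarrow> 's \<Rightarrow> real) \<Rightarrow> 's \<Rightarrow> 'a \<Rightarrow> 's pmf" where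
  "trans_pmf P s a = embed_pmf (P s a)"

definition is_MSSP :: "('s::finite \<Rightarrow> 'a::finite \<Rightarrow> 's \<Rightarrow> real) \<Rightarrow> nat \<Rightarrow> (nat \<Rightarrow> 's) \<Rightarrow> (nat \<Rightarrow> 's set) \<Rightarrow> bool" where
  "is_MSSP P k iota T \<longleftrightarrow> is_MDP P \<and> k \<ge> 1 \<and> (\<forall>i<k. iota i \<notin> T i \<and> T i \<noteq> {})"

(* A finite-memory (randomized) strategy; memory states are natural numbers,
   the actual memory set Mem is given separately (see valid_strat). *)
record ('s, 'a) strat =
  init_mem :: "nat pmf"
  act_rule :: "'s \<Rightarrow> nat \<Rightarrow> 'a pmf"
  upd_rule :: "nat \<Rightarrow> 's \<Rightarrow> 'a \<Rightarrow> 's \<Rightarrow> nat pmf"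
     (* memory, current state, chosen action, next state  \<mapsto>  new memory *)

definition valid_strat :: "('s::finite \<Rightarrow> 'a \<Rightarrow> 's \<Rightarrow> real) \<Rightarrow> nat set \<Rightarrow> ('s, 'a) strat \<Rightarrow> bool" where
  "valid_strat P Mem \<sigma> \<longleftrightarrow>
     set_pmf (init_mem \<sigma>) \<subseteq> Mem \<and>
     (\<forall>s. \<forall>m\<in>Mem. set_pmf (act_rule \<sigma> s m) \<subseteq> En P s \<and>
        (\<forall>a s'. set_pmf (upd_rule \<sigma> m s a s') \<subseteq> Mem))"

type_synonym ('s, 'a) profile = "nat \<Rightarrow> ('s, 'a) strat"

definition in_Pi :: "('s::finite \<Rightarrow> 'a \<Rightarrow> 's \<Rightarrow> real) \<Rightarrow> nat \<Rightarrow> ('s, 'a) profile \<Rightarrow> bool" where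
  "in_Pi P k \<pi> \<longleftrightarrow> (\<forall>i<k. \<exists>Mem. valid_strat P Mem (\<pi> i))"

definition in_Pi_n :: "('s::finite \<Rightarrow> 'a \<Rightarrow> 's \<Rightarrow> real) \<Rightarrow> nat \<Rightarrow> nat \<Rightarrow> ('s, 'a) profile \<Rightarrow> bool" where
  "in_Pi_n P k n \<pi> \<longleftrightarrow> (\<forall>i<k. \<exists>Mem. finite Mem \<and> card Mem \<le> n \<and> valid_strat P Mem (\<pi> i))"

definition agent_step :: "('s::finite \<Rightarrow> 'a \<Rightarrow> 's \<Rightarrow> real) \<Rightarrow> ('s, 'a) strat \<Rightarrow> 's \<times> nat \<Rightarrow> ('s \<times> nat) pmf" where
  "agent_step P \<sigma> c =
     (case c of (s, m) \<Rightarrow>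
       do { a \<leftarrow> act_rule \<sigma> s m;
            s' \<leftarrow> trans_pmf P s a;
            m' \<leftarrow> upd_rule \<sigma> m s a s';
            return_pmf (s', m') })"

(* joint configuration: agent index \<mapsto> (state, memory); agents evolve independently *)
definition joint_init :: "nat \<Rightarrow> (nat \<Rightarrow> 's) \<Rightarrow> ('s, 'a) profile \<Rightarrow> (nat \<Rightarrow> 's \<times> nat) pmf" where
  "joint_init k iota \<pi> = Pi_pmf {..<k} undefined (\<lambda>i. map_pmf (\<lambda>m. (iota i, m)) (init_mem (\<pi> i)))"

definition joint_step :: "('s::finite \<Rightarrow> 'a \<Rightarrow> 's \<Rightarrow> real) \<Rightarrow> nat \<Rightarrow> ('s, 'a) profile \<Rightarrow> (nat \<Rightarrow> 's \<times> nat) \<Rightarrow> (nat \<Rightarrow> 's \<times> nat) pmf" where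
  "joint_step P k \<pi> c = Pi_pmf {..<k} undefined (\<lambda>i. agent_step P (\<pi> i) (c i))"

(* distribution of the joint run prefix of length t+1 (configurations at times 0..t) *)
fun path_pmf :: "('s::finite \<Rightarrow> 'a \<Rightarrow> 's \<Rightarrow> real) \<Rightarrow> nat \<Rightarrow> (nat \<Rightarrow> 's) \<Rightarrow> ('s, 'a) profile \<Rightarrow> nat \<Rightarrow> (nat \<Rightarrow> 's \<times> nat) list pmf" where
  "path_pmf P k iota \<pi> 0 = map_pmf (\<lambda>c. [c]) (joint_init k iota \<pi>)"
| "path_pmf P k iota \<pi> (Suc t) =
     bind_pmf (path_pmf P k iota \<pi> t) (\<lambda>p. map_pmf (\<lambda>c. p @ [c]) (joint_step P k \<pi> (last p)))"

definition some_hit :: "nat \<Rightarrow> (nat \<Rightarrow> 's set) \<Rightarrow> (nat \<Rightarrow> 's \<times> nat) \<Rightarrow> bool" where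
  "some_hit k T c \<longleftrightarrow> (\<exists>i<k. fst (c i) \<in> T i)"

definition prob_MHit_eq :: "('s::finite \<Rightarrow> 'a \<Rightarrow> 's \<Rightarrow> real) \<Rightarrow> nat \<Rightarrow> (nat \<Rightarrow> 's) \<Rightarrow> (nat \<Rightarrow> 's set) \<Rightarrow> ('s, 'a) profile \<Rightarrow> nat \<Rightarrow> real" where
  "prob_MHit_eq P k iota T \<pi> t =
     measure_pmf.prob (path_pmf P k iota \<pi> t)
       {p. some_hit k T (p ! t) \<and> (\<forall>j<t. \<not> some_hit k T (p ! j))}"

(* E_pi[MHit] = sum_t t * Pr[MHit = t] + \<infinity> * Pr[MHit = \<infinity>] *)
definition exp_MHit :: "('s::finite \<Rightarrow> 'a \<Rightarrow> 's \<Rightarrow> real) \<Rightarrow> nat \<Rightarrow> (nat \<Rightarrow> 's) \<Rightarrow> (nat \<Rightarrow> 's set) \<Rightarrow> ('s, 'a) profile \<Rightarrow> ennreal" where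
  "exp_MHit P k iota T \<pi> =
     (\<Sum>t. of_nat t * ennreal (prob_MHit_eq P k iota T \<pi> t))
     + \<top> * (1 - (\<Sum>t. ennreal (prob_MHit_eq P k iota T \<pi> t)))"

end

theory Submission
  imports Defs
begin

(* Since the agents move independently, the probability that no agent has hit its target by
   time t is the product of the individual survival probabilities, and E[MHit] is the sum over t
   of these products.  The survival sequence of a single agent is attained by a point of a
   compact parameter space on which it depends continuously: for arbitrary memory one may
   restrict to Markov strategies, whose choices depend only on time and state (a version of
   Kuhn's theorem); for memory at most n, relabel the memory states as 0, ..., n - 1 and take
   the transition probabilities as parameters.  The objective is then a series of nonnegative
   continuous functions on a compact product space, hence lower semicontinuous, and attains
   its infimum. *)

section \<open>Series of continuous functions on compact sets\<close>

lemma compact_funs_into: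
  fixes S :: "'x::metric_space set"
  assumes "compact S"
  shows "compact {\<theta> :: 'i::countable \<Rightarrow> 'x. \<forall>j. \<theta> j \<in> S}"
proof -
  have "compactin (product_topology (\<lambda>_. euclidean) UNIV) (PiE UNIV (\<lambda>_::'i. S))"
    using assms by (simp add: compactin_PiE compactin_euclidean_iff)
  moreover have "PiE UNIV (\<lambda>_::'i. S) = {\<theta>. \<forall>j. \<theta> j \<in> S}"
    by (auto simp: PiE_def Pi_def)
  ultimately show ?thesis
    by (simp add: euclidean_product_topology compactin_euclidean_iff)
qed

lemma closed_Collect_eq_const:
  fixes f :: "'x::topological_space \<Rightarrow> real"
  assumes "continuous_on UNIV f"
  shows "closed {x. f x = c}"
  using closed_vimage[OF closed_singleton[of c] assms] by (simp add: vimage_def)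

text \<open>The series is lower semicontinuous, being the supremum of its continuous partial sums.\<close>

lemma suminf_ennreal_attains_Inf:
  fixes f :: "nat \<Rightarrow> 'x::metric_space \<Rightarrow> real"
  assumes K: "compact K" "K \<noteq> {}"
    and cont: "\<And>t. continuous_on K (f t)"
    and nonneg: "\<And>t x. x \<in> K \<Longrightarrow> 0 \<le> f t x"
  shows "\<exists>x\<in>K. \<forall>y\<in>K. (\<Sum>t. ennreal (f t x)) \<le> (\<Sum>t. ennreal (f t y))"
proof -
  define G where "G x = (\<Sum>t. ennreal (f t x))" for x
  have partial_le: "ennreal (\<Sum>t<N. f t x) \<le> G x" if "x \<in> K" for x N
  proof -
    have "ennreal (\<Sum>t<N. f t x) = (\<Sum>t<N. ennreal (f t x))"
      using nonneg[OF that] by (simp add: sum_ennreal)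
    also have "\<dots> \<le> G x"
      unfolding G_def by (rule sum_le_suminf) auto
    finally show ?thesis .
  qed
  obtain u where u: "\<And>n. u n \<in> G ` K" and u_lim: "u \<longlonglongrightarrow> Inf (G ` K)"
    using Inf_as_limit[of "G ` K"] K(2) by auto
  from u have "\<forall>n. \<exists>x\<in>K. u n = G x" by blast
  then obtain x where x: "\<And>n. x n \<in> K" and ux: "\<And>n. u n = G (x n)"
    by metis
  obtain l r where l: "l \<in> K" and r: "strict_mono r" and xr_lim: "(x \<circ> r) \<longlonglongrightarrow> l"
    using compact_imp_seq_compact[OF K(1)] x unfolding seq_compact_def by metis
  have "ennreal (\<Sum>t<N. f t l) \<le> Inf (G ` K)" for N
  proof (rule LIMSEQ_le)
    have "continuous_on K (\<lambda>x. \<Sum>t<N. f t x)"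
      by (intro continuous_on_sum cont)
    then have "(\<lambda>n. \<Sum>t<N. f t ((x \<circ> r) n)) \<longlonglongrightarrow> (\<Sum>t<N. f t l)"
      using l x xr_lim by (auto simp: continuous_on_sequentially comp_def)
    then show "(\<lambda>n. ennreal (\<Sum>t<N. f t ((x \<circ> r) n))) \<longlonglongrightarrow> ennreal (\<Sum>t<N. f t l)"
      by (rule tendsto_ennrealI)
    show "(\<lambda>n. u (r n)) \<longlonglongrightarrow> Inf (G ` K)"
      using LIMSEQ_subseq_LIMSEQ[OF u_lim r] by (simp add: comp_def)
    show "\<exists>N0. \<forall>n\<ge>N0. ennreal (\<Sum>t<N. f t ((x \<circ> r) n)) \<le> u (r n)"
      using partial_le x ux by auto
  qed
  then have "G l \<le> Inf (G ` K)"
    unfolding G_def suminf_eq_SUP using nonneg[OF l]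
    by (auto intro!: SUP_least simp: sum_ennreal)
  then show ?thesis
    using l by (metis G_def INF_lower order_trans)
qed

section \<open>Expectation from tail probabilities\<close>

lemma suminf_ennreal_commute: "(\<Sum>u. \<Sum>t. g u t :: ennreal) = (\<Sum>t. \<Sum>u. g u t)"
proof -
  have "(\<Sum>t. \<Sum>u. g u t) = (\<integral>\<^sup>+t. (\<Sum>u. g u t) \<partial>count_space UNIV)"
    by (simp add: nn_integral_count_space_nat)
  also have "\<dots> = (\<Sum>u. \<integral>\<^sup>+t. g u t \<partial>count_space UNIV)"
    by (rule nn_integral_suminf) simp
  also have "\<dots> = (\<Sum>u. \<Sum>t. g u t)"
    by (simp add: nn_integral_count_space_nat)
  finally show ?thesis ..
qed

lemma suminf_of_nat_mult_decrement:
  fixes q :: "nat \<Rightarrow> real"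
  assumes dec: "decseq q" and q_lim: "q \<longlonglongrightarrow> L"
  shows "(\<Sum>t. of_nat t * ennreal (q t - q (Suc t))) = (\<Sum>u. ennreal (q (Suc u) - L))"
proof -
  have step_nonneg: "0 \<le> q t - q (Suc t)" for t
    using dec by (simp add: decseq_Suc_iff)
  have tail_sums: "(\<lambda>t. if u < t then q t - q (Suc t) else 0) sums (q (Suc u) - L)" for u
  proof -
    have "(\<lambda>i. q (i + Suc u)) \<longlonglongrightarrow> L"
      using LIMSEQ_ignore_initial_segment[OF q_lim] .
    then have "(\<lambda>i. q (i + Suc u) - q (Suc i + Suc u)) sums (q (0 + Suc u) - L)"
      by (rule telescope_sums')
    then have "(\<lambda>i. (\<lambda>t. if u < t then q t - q (Suc t) else 0) (i + Suc u)) sums (q (Suc u) - L)"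
      by simp
    then show ?thesis
      using sums_iff_shift[of "\<lambda>t. if u < t then q t - q (Suc t) else 0" "Suc u"] by simp
  qed
  have "of_nat t * ennreal (q t - q (Suc t)) = (\<Sum>u. if u < t then ennreal (q t - q (Suc t)) else 0)" for t
    by (subst suminf_finite[of "{..<t}"]) auto
  then have "(\<Sum>t. of_nat t * ennreal (q t - q (Suc t))) =
      (\<Sum>t. \<Sum>u. if u < t then ennreal (q t - q (Suc t)) else 0)"
    by simp
  also have "\<dots> = (\<Sum>u. \<Sum>t. if u < t then ennreal (q t - q (Suc t)) else 0)"
    by (rule suminf_ennreal_commute[symmetric])
  also have "\<dots> = (\<Sum>u. ennreal (q (Suc u) - L))"
  proof (rule suminf_cong)
    fix u
    have "(\<Sum>t. if u < t then ennreal (q t - q (Suc t)) else 0) =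
        (\<Sum>t. ennreal (if u < t then q t - q (Suc t) else 0))"
      by (intro suminf_cong) simp
    also have "\<dots> = ennreal (q (Suc u) - L)"
    proof (rule suminf_ennreal_eq[OF _ tail_sums])
      show "0 \<le> (if u < t then q t - q (Suc t) else 0)" for t
        using step_nonneg[of t] by simp
    qed
    finally show "(\<Sum>t. if u < t then ennreal (q t - q (Suc t)) else 0) = ennreal (q (Suc u) - L)" .
  qed
  finally show ?thesis .
qed

text \<open>If \<open>q t\<close> is the probability that a random variable \<open>X\<close> with values in
  \<open>\<nat> \<union> {\<infinity>}\<close> satisfies \<open>X \<ge> t\<close>, the left-hand side is \<open>E[X]\<close>.\<close>

lemma expectation_eq_suminf_tail:
  fixes q :: "nat \<Rightarrow> real"
  assumes dec: "decseq q" and q0: "q 0 = 1" and nonneg: "\<And>t. 0 \<le> q t"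
  shows "(\<Sum>t. of_nat t * ennreal (q t - q (Suc t))) + \<top> * (1 - (\<Sum>t. ennreal (q t - q (Suc t))))
       = (\<Sum>t. ennreal (q (Suc t)))"
proof -
  have step_nonneg: "0 \<le> q t - q (Suc t)" for t
    using dec by (simp add: decseq_Suc_iff)
  define L where "L = (INF t. q t)"
  have q_lim: "q \<longlonglongrightarrow> L"
    unfolding L_def using nonneg by (intro LIMSEQ_decseq_INF dec) (auto intro!: bdd_belowI[of _ 0])
  have L_le: "L \<le> q t" for t
    using decseq_ge[OF dec q_lim] .
  have L_nonneg: "0 \<le> L"
    using q_lim nonneg by (intro LIMSEQ_le_const) auto
  have mean: "(\<Sum>t. of_nat t * ennreal (q t - q (Suc t))) = (\<Sum>u. ennreal (q (Suc u) - L))"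
    by (rule suminf_of_nat_mult_decrement[OF dec q_lim])
  have "(\<lambda>t. q t - q (Suc t)) sums (1 - L)"
    using telescope_sums'[OF q_lim] q0 by simp
  then have total: "(\<Sum>t. ennreal (q t - q (Suc t))) = ennreal (1 - L)"
    by (rule suminf_ennreal_eq[OF step_nonneg])
  have "0 \<le> 1 - L"
    using L_le[of 0] q0 by simp
  then have "ennreal 1 - ennreal (1 - L) = ennreal (1 - (1 - L))"
    by (rule ennreal_minus)
  then have defect: "1 - (\<Sum>t. ennreal (q t - q (Suc t))) = ennreal L"
    unfolding total by simp
  show ?thesis
    unfolding mean defect
  proof (cases "L = 0")
    case False
    then have L_pos: "0 < L" using L_nonneg by simp
    have "(\<Sum>t. ennreal (q (Suc t))) = \<top>"
    proof (rule ccontr)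
      assume "(\<Sum>t. ennreal (q (Suc t))) \<noteq> \<top>"
      then have "summable (\<lambda>t. q (Suc t))"
        by (rule summable_suminf_not_top[of "\<lambda>t. q (Suc t)", OF nonneg])
      then have "(\<lambda>t. q (Suc t)) \<longlonglongrightarrow> 0"
        by (rule summable_LIMSEQ_zero)
      then have "L \<le> 0"
        by (rule LIMSEQ_le_const) (use L_le in auto)
      then show False using L_pos by simp
    qed
    then show "(\<Sum>u. ennreal (q (Suc u) - L)) + \<top> * ennreal L = (\<Sum>t. ennreal (q (Suc t)))"
      using L_pos by simp
  qed simp
qed

section \<open>Probability mass functions\<close>

lemma embed_pmf_pmf: "embed_pmf (pmf p) = p"
  by (rule type_definition.Rep_inverse[OF td_pmf_embed_pmf])

lemma pmf_embed_pmf_finite_support: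
  fixes f :: "'x \<Rightarrow> real"
  assumes "finite A" and nonneg: "\<And>x. 0 \<le> f x" and "\<And>x. x \<notin> A \<Longrightarrow> f x = 0" and "(\<Sum>x\<in>A. f x) = 1"
  shows "pmf (embed_pmf f) = f" "set_pmf (embed_pmf f) = {x. f x \<noteq> 0}"
proof -
  have "(\<integral>\<^sup>+ x. ennreal (f x) \<partial>count_space UNIV) = (\<Sum>x\<in>A. ennreal (f x))"
    using assms by (intro nn_integral_count_space') auto
  also have "\<dots> = 1"
    using assms by (simp add: sum_ennreal)
  finally have total: "(\<integral>\<^sup>+ x. ennreal (f x) \<partial>count_space UNIV) = 1" .
  show "pmf (embed_pmf f) = f"
    using pmf_embed_pmf[OF nonneg total] by auto
  show "set_pmf (embed_pmf f) = {x. f x \<noteq> 0}"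
    using set_embed_pmf[OF nonneg total] .
qed

lemma prob_bind_pmf:
  "measure_pmf.prob (bind_pmf M f) A = measure_pmf.expectation M (\<lambda>x. measure_pmf.prob (f x) A)"
proof -
  have "measure_pmf.prob (bind_pmf M f) A = pmf (map_pmf (\<lambda>x. x \<in> A) (bind_pmf M f)) True"
    by (simp add: pmf_map vimage_def)
  also have "\<dots> = pmf (bind_pmf M (\<lambda>x. map_pmf (\<lambda>x. x \<in> A) (f x))) True"
    by (simp add: map_bind_pmf)
  also have "\<dots> = measure_pmf.expectation M (\<lambda>x. measure_pmf.prob (f x) A)"
    by (simp add: pmf_bind pmf_map vimage_def)
  finally show ?thesis .
qed

lemma pmf_bind_Pair:
  "pmf (bind_pmf M (\<lambda>x. map_pmf (Pair x) (N x))) (x, y) = pmf M x * pmf (N x) y"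
proof -
  have "pmf (map_pmf (Pair x') (N x')) (x, y) = (if x' = x then pmf (N x) y else 0)" for x'
    by (auto simp: pmf_map_inj' inj_on_def pmf_eq_0_set_pmf)
  then have "pmf (bind_pmf M (\<lambda>x. map_pmf (Pair x) (N x))) (x, y) =
      measure_pmf.expectation M (\<lambda>x'. if x' = x then pmf (N x) y else 0)"
    by (simp add: pmf_bind)
  also have "\<dots> = (\<Sum>x'\<in>{x}. (if x' = x then pmf (N x) y else 0) * pmf M x')"
    by (rule integral_measure_pmf_real) (auto split: if_splits)
  finally show ?thesis by simp
qed

lemma map_Pi_pmf_componentwise:
  assumes "finite A"
  shows "map_pmf (\<lambda>h i. if i \<in> A then g i (h i) else D) (Pi_pmf A d p) =
         Pi_pmf A D (\<lambda>i. map_pmf (g i) (p i))"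
proof -
  have "Pi_pmf A D (\<lambda>i. map_pmf (g i) (p i)) = Pi_pmf A D (\<lambda>i. bind_pmf (p i) (\<lambda>x. return_pmf (g i x)))"
    by (simp add: map_pmf_def)
  also have "\<dots> = bind_pmf (Pi_pmf A d p) (\<lambda>f. Pi_pmf A D (\<lambda>i. return_pmf (g i (f i))))"
    by (rule Pi_pmf_bind[OF assms])
  also have "\<dots> = bind_pmf (Pi_pmf A d p) (\<lambda>f. return_pmf (\<lambda>i. if i \<in> A then g i (f i) else D))"
    by (simp add: Pi_pmf_return_pmf[OF assms])
  finally show ?thesis by (simp add: map_pmf_def)
qed

section \<open>Runs of a single agent\<close>

lemma pmf_trans_pmf:
  assumes "is_MDP P" "a \<in> En P s"
  shows "pmf (trans_pmf P s a) s' = P s a s'"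
  using pmf_embed_pmf_finite_support(1)[of UNIV "P s a"] assms
  unfolding is_MDP_def En_def trans_pmf_def by auto

lemma some_action_enabled:
  assumes "is_MDP P"
  shows "(SOME a. a \<in> En P s) \<in> En P s"
  using assms by (simp add: is_MDP_def some_in_eq)

text \<open>The Boolean component records that \<open>Ti\<close> has not been visited up to the present.\<close>

fun agent_run ::
  "('s::finite \<Rightarrow> 'a \<Rightarrow> 's \<Rightarrow> real) \<Rightarrow> ('s, 'a) strat \<Rightarrow> 's \<Rightarrow> 's set \<Rightarrow> nat \<Rightarrow> ('s \<times> nat \<times> bool) pmf"
  where
    "agent_run P \<sigma> \<iota> Ti 0 = map_pmf (\<lambda>m. (\<iota>, m, \<iota> \<notin> Ti)) (init_mem \<sigma>)"
  | "agent_run P \<sigma> \<iota> Ti (Suc t) = bind_pmf (agent_run P \<sigma> \<iota> Ti t)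
      (\<lambda>x. map_pmf (\<lambda>y. (fst y, snd y, snd (snd x) \<and> fst y \<notin> Ti)) (agent_step P \<sigma> (fst x, fst (snd x))))"

definition survival :: "('s::finite \<Rightarrow> 'a \<Rightarrow> 's \<Rightarrow> real) \<Rightarrow> ('s, 'a) strat \<Rightarrow> 's \<Rightarrow> 's set \<Rightarrow> nat \<Rightarrow> real"
  where "survival P \<sigma> \<iota> Ti t = measure_pmf.prob (agent_run P \<sigma> \<iota> Ti t) {x. snd (snd x)}"

lemma mem_agent_run:
  assumes "valid_strat P Mem \<sigma>" "x \<in> set_pmf (agent_run P \<sigma> \<iota> Ti t)"
  shows "fst (snd x) \<in> Mem"
  using assms(2)
proof (induction t arbitrary: x)
  case 0
  then show ?case using assms(1) unfolding valid_strat_def by auto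
next
  case (Suc t)
  then obtain x0 y where x0: "x0 \<in> set_pmf (agent_run P \<sigma> \<iota> Ti t)"
    and y: "y \<in> set_pmf (agent_step P \<sigma> (fst x0, fst (snd x0)))"
    and x: "x = (fst y, snd y, snd (snd x0) \<and> fst y \<notin> Ti)"
    by auto
  have "fst (snd x0) \<in> Mem"
    using Suc.IH[OF x0] .
  then show ?case
    using assms(1) x y unfolding agent_step_def valid_strat_def by fastforce
qed

lemma prob_agent_step_state:
  assumes "is_MDP P" "valid_strat P Mem \<sigma>" "m \<in> Mem"
  shows "measure_pmf.prob (agent_step P \<sigma> (s, m)) {y. fst y = s'} =
         (\<Sum>a\<in>UNIV. pmf (act_rule \<sigma> s m) a * P s a s')"
proof -
  have "map_pmf fst (agent_step P \<sigma> (s, m)) = bind_pmf (act_rule \<sigma> s m) (trans_pmf P s)"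
    unfolding agent_step_def
    by (simp add: map_bind_pmf bind_return_pmf' map_pmf_def[symmetric] map_pmf_comp)
  moreover have "measure_pmf.prob (agent_step P \<sigma> (s, m)) {y. fst y = s'} =
      pmf (map_pmf fst (agent_step P \<sigma> (s, m))) s'"
    by (simp add: pmf_map vimage_def)
  ultimately have "measure_pmf.prob (agent_step P \<sigma> (s, m)) {y. fst y = s'} =
      measure_pmf.expectation (act_rule \<sigma> s m) (\<lambda>a. pmf (trans_pmf P s a) s')"
    by (simp add: pmf_bind)
  also have "\<dots> = (\<Sum>a\<in>UNIV. pmf (trans_pmf P s a) s' * pmf (act_rule \<sigma> s m) a)"
    by (rule integral_measure_pmf_real) auto
  also have "\<dots> = (\<Sum>a\<in>UNIV. pmf (act_rule \<sigma> s m) a * P s a s')"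
  proof (rule sum.cong)
    fix a
    show "pmf (trans_pmf P s a) s' * pmf (act_rule \<sigma> s m) a = pmf (act_rule \<sigma> s m) a * P s a s'"
    proof (cases "a \<in> set_pmf (act_rule \<sigma> s m)")
      case True
      then have "a \<in> En P s" using assms unfolding valid_strat_def by auto
      then show ?thesis using pmf_trans_pmf[OF assms(1)] by simp
    qed (simp add: set_pmf_eq)
  qed simp
  finally show ?thesis .
qed

lemma prob_agent_step_alive:
  fixes P :: "'s::finite \<Rightarrow> 'a::finite \<Rightarrow> 's \<Rightarrow> real"
  assumes "is_MDP P" "valid_strat P Mem \<sigma>" "m \<in> Mem"
  shows "measure_pmf.prob (map_pmf (\<lambda>y. (fst y, snd y, b \<and> fst y \<notin> Ti)) (agent_step P \<sigma> (s, m)))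
      {x. fst x = s' \<and> snd (snd x)} =
    (if b \<and> s' \<notin> Ti then \<Sum>a\<in>UNIV. pmf (act_rule \<sigma> s m) a * P s a s' else 0)"
proof -
  have preimage: "(\<lambda>y. (fst y, snd y, b \<and> fst y \<notin> Ti)) -` {x. fst x = s' \<and> snd (snd x)} =
      (if b \<and> s' \<notin> Ti then {y. fst y = s'} else {})"
    by auto
  show ?thesis
    unfolding measure_map_pmf preimage using prob_agent_step_state[OF assms] by simp
qed

lemma pmf_agent_step:
  fixes P :: "'s::finite \<Rightarrow> 'a::finite \<Rightarrow> 's \<Rightarrow> real"
  shows "pmf (agent_step P \<sigma> (s, m)) (s', m') =
    (\<Sum>a\<in>UNIV. pmf (act_rule \<sigma> s m) a * pmf (trans_pmf P s a) s' * pmf (upd_rule \<sigma> m s a s') m')"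
proof -
  have "agent_step P \<sigma> (s, m) = bind_pmf (act_rule \<sigma> s m)
      (\<lambda>a. bind_pmf (trans_pmf P s a) (\<lambda>s''. map_pmf (Pair s'') (upd_rule \<sigma> m s a s'')))"
    by (simp add: agent_step_def map_pmf_def)
  then have "pmf (agent_step P \<sigma> (s, m)) (s', m') = measure_pmf.expectation (act_rule \<sigma> s m)
      (\<lambda>a. pmf (trans_pmf P s a) s' * pmf (upd_rule \<sigma> m s a s') m')"
    by (simp only: pmf_bind[of "act_rule \<sigma> s m"] pmf_bind_Pair)
  also have "\<dots> = (\<Sum>a\<in>UNIV. pmf (trans_pmf P s a) s' * pmf (upd_rule \<sigma> m s a s') m' * pmf (act_rule \<sigma> s m) a)"
    by (rule integral_measure_pmf_real) auto
  finally show ?thesis by (simp add: mult_ac)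
qed

lemma pmf_agent_run_Suc_alive:
  "pmf (agent_run P \<sigma> \<iota> Ti (Suc t)) (s, m, True) = measure_pmf.expectation (agent_run P \<sigma> \<iota> Ti t)
     (\<lambda>x. if snd (snd x) \<and> s \<notin> Ti then pmf (agent_step P \<sigma> (fst x, fst (snd x))) (s, m) else 0)"
proof -
  have "(\<lambda>y. (fst y, snd y, b \<and> fst y \<notin> Ti)) -` {(s, m, True)} = (if b \<and> s \<notin> Ti then {(s, m)} else {})" for b
    by auto
  moreover have "measure_pmf.prob M (if c then {(s, m)} else {}) = (if c then pmf M (s, m) else 0)" for M c
    by (simp add: measure_pmf_single)
  ultimately show ?thesis
    by (simp add: pmf_bind pmf_map)
qed

section \<open>The expected hitting time of a profile\<close>

definition no_hit_before ::
  "('s::finite \<Rightarrow> 'a \<Rightarrow> 's \<Rightarrow> real) \<Rightarrow> nat \<Rightarrow> (nat \<Rightarrow> 's) \<Rightarrow> (nat \<Rightarrow> 's set) \<Rightarrow> ('s, 'a) profile \<Rightarrow> nat \<Rightarrow> real"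
  where "no_hit_before P k iota T \<pi> t =
    measure_pmf.prob (path_pmf P k iota \<pi> t) {p. \<forall>j<t. \<not> some_hit k T (p ! j)}"

lemma length_path_pmf: "p \<in> set_pmf (path_pmf P k iota \<pi> t) \<Longrightarrow> length p = Suc t"
  by (induction t arbitrary: p) auto

lemma map_butlast_path_pmf: "map_pmf butlast (path_pmf P k iota \<pi> (Suc t)) = path_pmf P k iota \<pi> t"
  by (simp add: map_bind_pmf map_pmf_comp bind_return_pmf')

lemma no_hit_before_0: "no_hit_before P k iota T \<pi> 0 = 1"
  by (simp add: no_hit_before_def)

lemma no_hit_before_Suc:
  "no_hit_before P k iota T \<pi> (Suc t) =
   measure_pmf.prob (path_pmf P k iota \<pi> t) {p. \<forall>j\<le>t. \<not> some_hit k T (p ! j)}"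
proof -
  let ?M = "path_pmf P k iota \<pi> (Suc t)"
  let ?A = "{p. \<forall>j\<le>t. \<not> some_hit k T (p ! j)}"
  have "measure_pmf.prob (path_pmf P k iota \<pi> t) ?A = measure_pmf.prob (map_pmf butlast ?M) ?A"
    by (simp only: map_butlast_path_pmf)
  also have "\<dots> = measure_pmf.prob ?M (butlast -` ?A \<inter> set_pmf ?M)"
    by (simp only: measure_map_pmf measure_Int_set_pmf)
  also have "butlast -` ?A \<inter> set_pmf ?M = {p. \<forall>j<Suc t. \<not> some_hit k T (p ! j)} \<inter> set_pmf ?M"
  proof -
    have "butlast p ! j = p ! j" if "p \<in> set_pmf ?M" "j \<le> t" for p j
      using length_path_pmf[OF that(1)] that(2) by (simp add: nth_butlast)
    then show ?thesis by (auto simp: less_Suc_eq_le simp del: path_pmf.simps)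
  qed
  also have "measure_pmf.prob ?M \<dots> = no_hit_before P k iota T \<pi> (Suc t)"
    by (simp only: measure_Int_set_pmf no_hit_before_def)
  finally show ?thesis ..
qed

lemma prob_MHit_eq_eq_diff:
  "prob_MHit_eq P k iota T \<pi> t = no_hit_before P k iota T \<pi> t - no_hit_before P k iota T \<pi> (Suc t)"
proof -
  have "{p. \<forall>j<t. \<not> some_hit k T (p ! j)} =
        {p. some_hit k T (p ! t) \<and> (\<forall>j<t. \<not> some_hit k T (p ! j))} \<union> {p. \<forall>j\<le>t. \<not> some_hit k T (p ! j)}"
    by (auto simp: order_le_less)
  then have "no_hit_before P k iota T \<pi> t = prob_MHit_eq P k iota T \<pi> t +
      measure_pmf.prob (path_pmf P k iota \<pi> t) {p. \<forall>j\<le>t. \<not> some_hit k T (p ! j)}"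
    unfolding no_hit_before_def prob_MHit_eq_def
    by (subst measure_pmf.finite_measure_Union[symmetric]) auto
  then show ?thesis by (simp add: no_hit_before_Suc)
qed

lemma exp_MHit_eq_suminf_no_hit_before:
  "exp_MHit P k iota T \<pi> = (\<Sum>t. ennreal (no_hit_before P k iota T \<pi> (Suc t)))"
proof -
  have "0 \<le> prob_MHit_eq P k iota T \<pi> t" for t
    unfolding prob_MHit_eq_def by (rule measure_nonneg)
  then have "decseq (no_hit_before P k iota T \<pi>)"
    by (simp add: decseq_Suc_iff prob_MHit_eq_eq_diff)
  then show ?thesis
    unfolding exp_MHit_def prob_MHit_eq_eq_diff
    by (rule expectation_eq_suminf_tail) (simp_all add: no_hit_before_0 no_hit_before_def)
qed

definition agent_views :: "nat \<Rightarrow> (nat \<Rightarrow> 's set) \<Rightarrow> (nat \<Rightarrow> 's \<times> nat) list \<Rightarrow> nat \<Rightarrow> 's \<times> nat \<times> bool"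
  where "agent_views k T p = (\<lambda>i. if i < k
    then (fst (last p i), snd (last p i), \<forall>j<length p. fst ((p ! j) i) \<notin> T i) else undefined)"

lemma agent_views_single:
  "agent_views k T [c] = (\<lambda>i. if i \<in> {..<k} then (fst (c i), snd (c i), fst (c i) \<notin> T i) else undefined)"
  by (auto simp: agent_views_def)

lemma agent_views_snoc:
  "agent_views k T (p @ [c]) = (\<lambda>i. if i \<in> {..<k}
     then (fst (c i), snd (c i), snd (snd (agent_views k T p i)) \<and> fst (c i) \<notin> T i) else undefined)"
  by (auto simp: agent_views_def fun_eq_iff nth_append less_Suc_eq)

lemma map_path_pmf_agent_views:
  fixes P :: "'s::finite \<Rightarrow> 'a \<Rightarrow> 's \<Rightarrow> real" and T :: "nat \<Rightarrow> 's set"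
  shows "map_pmf (agent_views k T) (path_pmf P k iota \<pi> t) =
   Pi_pmf {..<k} undefined (\<lambda>i. agent_run P (\<pi> i) (iota i) (T i) t)"
proof (induction t)
  case 0
  have "map_pmf (agent_views k T) (path_pmf P k iota \<pi> 0) =
      map_pmf (\<lambda>h i. if i \<in> {..<k} then (\<lambda>y. (fst y, snd y, fst y \<notin> T i)) (h i) else undefined)
        (joint_init k iota \<pi>)"
    by (simp add: map_pmf_comp agent_views_single)
  also have "\<dots> = Pi_pmf {..<k} undefined (\<lambda>i. agent_run P (\<pi> i) (iota i) (T i) 0)"
    unfolding joint_init_def by (subst map_Pi_pmf_componentwise) (simp_all add: map_pmf_comp)
  finally show ?case .
next
  case (Suc t)
  define step where "step x = Pi_pmf {..<k} undefined (\<lambda>i.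
    map_pmf (\<lambda>y. (fst y, snd y, snd (snd (x i)) \<and> fst y \<notin> T i)) (agent_step P (\<pi> i) (fst (x i), fst (snd (x i)))))"
    for x :: "nat \<Rightarrow> 's \<times> nat \<times> bool"
  have "map_pmf (\<lambda>c. agent_views k T (p @ [c])) (joint_step P k \<pi> (last p)) = step (agent_views k T p)"
    if "p \<in> set_pmf (path_pmf P k iota \<pi> t)" for p
  proof -
    have "p \<noteq> []" using length_path_pmf[OF that] by auto
    then have "joint_step P k \<pi> (last p) = Pi_pmf {..<k} undefined
        (\<lambda>i. agent_step P (\<pi> i) (fst (agent_views k T p i), fst (snd (agent_views k T p i))))"
      unfolding joint_step_def by (intro Pi_pmf_cong) (auto simp: agent_views_def)
    then show ?thesis
      using map_Pi_pmf_componentwise[of "{..<k}"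
          "\<lambda>i y. (fst y, snd y, snd (snd (agent_views k T p i)) \<and> fst y \<notin> T i)" undefined undefined
          "\<lambda>i. agent_step P (\<pi> i) (fst (agent_views k T p i), fst (snd (agent_views k T p i)))"]
      unfolding step_def agent_views_snoc by simp
  qed
  then have "map_pmf (agent_views k T) (path_pmf P k iota \<pi> (Suc t)) =
      bind_pmf (map_pmf (agent_views k T) (path_pmf P k iota \<pi> t)) step"
    by (simp add: map_bind_pmf map_pmf_comp bind_map_pmf cong: bind_pmf_cong)
  also have "\<dots> = Pi_pmf {..<k} undefined (\<lambda>i. agent_run P (\<pi> i) (iota i) (T i) (Suc t))"
    unfolding Suc step_def agent_run.simps by (rule Pi_pmf_bind[symmetric]) simp
  finally show ?case .
qed

lemma no_hit_before_Suc_eq_prod_survival: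
  "no_hit_before P k iota T \<pi> (Suc t) = (\<Prod>i<k. survival P (\<pi> i) (iota i) (T i) t)"
proof -
  let ?M = "path_pmf P k iota \<pi> t"
  let ?alive = "Pi {..<k} (\<lambda>_. {x. snd (snd x)})"
  have "no_hit_before P k iota T \<pi> (Suc t) =
      measure_pmf.prob ?M ({p. \<forall>j\<le>t. \<not> some_hit k T (p ! j)} \<inter> set_pmf ?M)"
    by (simp only: no_hit_before_Suc measure_Int_set_pmf)
  also have "{p. \<forall>j\<le>t. \<not> some_hit k T (p ! j)} \<inter> set_pmf ?M = agent_views k T -` ?alive \<inter> set_pmf ?M"
  proof -
    have "p \<in> agent_views k T -` ?alive \<longleftrightarrow> (\<forall>j\<le>t. \<not> some_hit k T (p ! j))"
      if "p \<in> set_pmf ?M" for p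
      using length_path_pmf[OF that] by (auto simp: agent_views_def some_hit_def Pi_iff less_Suc_eq_le)
    then show ?thesis by blast
  qed
  also have "measure_pmf.prob ?M \<dots> = measure_pmf.prob (map_pmf (agent_views k T) ?M) ?alive"
    by (simp only: measure_Int_set_pmf measure_map_pmf)
  also have "\<dots> = (\<Prod>i<k. survival P (\<pi> i) (iota i) (T i) t)"
    by (simp add: map_path_pmf_agent_views measure_Pi_pmf_Pi survival_def)
  finally show ?thesis .
qed

lemma exp_MHit_eq_suminf_prod_survival:
  "exp_MHit P k iota T \<pi> = (\<Sum>t. ennreal (\<Prod>i<k. survival P (\<pi> i) (iota i) (T i) t))"
  by (simp add: exp_MHit_eq_suminf_no_hit_before no_hit_before_Suc_eq_prod_survival)

lemma suminf_prod_attains_Inf: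
  fixes \<Theta> :: "'x::metric_space set" and \<phi> :: "nat \<Rightarrow> 'x \<Rightarrow> nat \<Rightarrow> real"
  assumes "compact \<Theta>" and "\<Theta> \<noteq> {}"
    and cont: "\<And>i t. continuous_on \<Theta> (\<lambda>\<theta>. \<phi> i \<theta> t)"
    and nonneg: "\<And>i \<theta> t. \<theta> \<in> \<Theta> \<Longrightarrow> 0 \<le> \<phi> i \<theta> t"
  shows "\<exists>\<theta>\<in>{\<theta>. \<forall>i. \<theta> i \<in> \<Theta>}. \<forall>\<theta>'\<in>{\<theta>. \<forall>i. \<theta> i \<in> \<Theta>}.
    (\<Sum>t. ennreal (\<Prod>i<k. \<phi> i (\<theta> i) t)) \<le> (\<Sum>t. ennreal (\<Prod>i<k. \<phi> i (\<theta>' i) t))"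
proof (rule suminf_ennreal_attains_Inf)
  show "compact {\<theta> :: nat \<Rightarrow> 'x. \<forall>i. \<theta> i \<in> \<Theta>}"
    using \<open>compact \<Theta>\<close> by (rule compact_funs_into)
  show "{\<theta> :: nat \<Rightarrow> 'x. \<forall>i. \<theta> i \<in> \<Theta>} \<noteq> {}"
    using \<open>\<Theta> \<noteq> {}\<close> by auto
  have "continuous_on {\<theta>. \<forall>i. \<theta> i \<in> \<Theta>} (\<lambda>\<theta>. \<phi> i (\<theta> i) t)" for i t
  proof (rule continuous_on_compose2[OF cont])
    show "continuous_on {\<theta>. \<forall>i. \<theta> i \<in> \<Theta>} (\<lambda>\<theta>. \<theta> i)"
      by (rule continuous_on_subset[OF continuous_on_product_coordinates]) simp
  qed auto
  then show "continuous_on {\<theta>. \<forall>i. \<theta> i \<in> \<Theta>} (\<lambda>\<theta>. \<Prod>i<k. \<phi> i (\<theta> i) t)" for t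
    by (intro continuous_on_prod)
  show "0 \<le> (\<Prod>i<k. \<phi> i (\<theta> i) t)" if "\<theta> \<in> {\<theta>. \<forall>i. \<theta> i \<in> \<Theta>}" for t \<theta>
    using that nonneg by (auto intro: prod_nonneg)
qed

lemma optimal_profile_from_parametrisation:
  fixes P :: "'s::finite \<Rightarrow> 'a::finite \<Rightarrow> 's \<Rightarrow> real"
    and \<Theta> :: "'x::metric_space set" and \<phi> :: "nat \<Rightarrow> 'x \<Rightarrow> nat \<Rightarrow> real"
    and Good :: "('s, 'a) strat \<Rightarrow> bool"
  assumes compact: "compact \<Theta>" and nonempty: "\<Theta> \<noteq> {}"
    and cont: "\<And>i t. continuous_on \<Theta> (\<lambda>\<theta>. \<phi> i \<theta> t)"
    and param: "\<And>i \<sigma>. Good \<sigma> \<Longrightarrow> \<exists>\<theta>\<in>\<Theta>. \<forall>t. survival P \<sigma> (iota i) (T i) t = \<phi> i \<theta> t"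
    and realise: "\<And>i \<theta>. \<theta> \<in> \<Theta> \<Longrightarrow> \<exists>\<sigma>. Good \<sigma> \<and> (\<forall>t. survival P \<sigma> (iota i) (T i) t = \<phi> i \<theta> t)"
  shows "\<exists>\<pi>. (\<forall>i<k. Good (\<pi> i)) \<and>
     exp_MHit P k iota T \<pi> = (INF \<pi>'\<in>{\<pi>'. \<forall>i<k. Good (\<pi>' i)}. exp_MHit P k iota T \<pi>')"
proof -
  define K where "K = {\<theta> :: nat \<Rightarrow> 'x. \<forall>i. \<theta> i \<in> \<Theta>}"
  define E where "E \<theta> = (\<Sum>t. ennreal (\<Prod>i<k. \<phi> i (\<theta> i) t))" for \<theta>
  have E: "exp_MHit P k iota T \<pi> = E \<theta>"
    if "\<And>i t. i < k \<Longrightarrow> survival P (\<pi> i) (iota i) (T i) t = \<phi> i (\<theta> i) t" for \<pi> \<theta>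
    using that by (simp add: exp_MHit_eq_suminf_prod_survival E_def)
  have nonneg: "0 \<le> \<phi> i \<theta> t" if "\<theta> \<in> \<Theta>" for i \<theta> t
    using realise[OF that] unfolding survival_def by (metis measure_nonneg)
  have "\<exists>\<theta>\<in>K. \<forall>\<theta>'\<in>K. E \<theta> \<le> E \<theta>'"
    unfolding K_def E_def using compact nonempty cont nonneg by (rule suminf_prod_attains_Inf)
  then obtain \<theta> where "\<theta> \<in> K" and min: "\<And>\<theta>'. \<theta>' \<in> K \<Longrightarrow> E \<theta> \<le> E \<theta>'"
    by blast
  then have "\<forall>i. \<exists>\<sigma>. Good \<sigma> \<and> (\<forall>t. survival P \<sigma> (iota i) (T i) t = \<phi> i (\<theta> i) t)"
    using realise unfolding K_def by blast
  then obtain \<pi> where \<pi>: "\<And>i. Good (\<pi> i)"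
    and \<pi>_survival: "\<And>i t. survival P (\<pi> i) (iota i) (T i) t = \<phi> i (\<theta> i) t"
    by (metis choice)
  have "exp_MHit P k iota T \<pi> \<le> exp_MHit P k iota T \<pi>'" if "\<forall>i<k. Good (\<pi>' i)" for \<pi>'
  proof -
    obtain \<theta>0 where "\<theta>0 \<in> \<Theta>" using nonempty by blast
    then have "\<forall>i. \<exists>\<theta>i. \<theta>i \<in> \<Theta> \<and> (i < k \<longrightarrow> (\<forall>t. survival P (\<pi>' i) (iota i) (T i) t = \<phi> i \<theta>i t))"
      using param that by blast
    then obtain \<theta>' where "\<forall>i. \<theta>' i \<in> \<Theta> \<and> (i < k \<longrightarrow> (\<forall>t. survival P (\<pi>' i) (iota i) (T i) t = \<phi> i (\<theta>' i) t))"
      by (metis choice)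
    then have "\<theta>' \<in> K" "\<And>i t. i < k \<Longrightarrow> survival P (\<pi>' i) (iota i) (T i) t = \<phi> i (\<theta>' i) t"
      unfolding K_def by auto
    then show ?thesis
      using E[of \<pi> \<theta>] E[of \<pi>' \<theta>'] min \<pi>_survival by simp
  qed
  then have "exp_MHit P k iota T \<pi> = (INF \<pi>'\<in>{\<pi>'. \<forall>i<k. Good (\<pi>' i)}. exp_MHit P k iota T \<pi>')"
    using \<pi> by (intro antisym INF_greatest INF_lower) auto
  then show ?thesis
    using \<pi> by blast
qed

section \<open>Markov strategies\<close>

definition alive_mass :: "('s::finite \<Rightarrow> 'a \<Rightarrow> 's \<Rightarrow> real) \<Rightarrow> ('s, 'a) strat \<Rightarrow> 's \<Rightarrow> 's set \<Rightarrow> nat \<Rightarrow> 's \<Rightarrow> real"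
  where "alive_mass P \<sigma> \<iota> Ti t s = measure_pmf.prob (agent_run P \<sigma> \<iota> Ti t) {x. fst x = s \<and> snd (snd x)}"

definition action_mass ::
  "('s::finite \<Rightarrow> 'a \<Rightarrow> 's \<Rightarrow> real) \<Rightarrow> ('s, 'a) strat \<Rightarrow> 's \<Rightarrow> 's set \<Rightarrow> nat \<Rightarrow> 's \<Rightarrow> 'a \<Rightarrow> real"
  where "action_mass P \<sigma> \<iota> Ti t s a = measure_pmf.expectation (agent_run P \<sigma> \<iota> Ti t)
    (\<lambda>x. if fst x = s \<and> snd (snd x) then pmf (act_rule \<sigma> s (fst (snd x))) a else 0)"

lemma survival_eq_sum_alive_mass: "survival P \<sigma> \<iota> Ti t = (\<Sum>s\<in>UNIV. alive_mass P \<sigma> \<iota> Ti t s)"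
proof -
  let ?Y = "agent_run P \<sigma> \<iota> Ti t"
  have "survival P \<sigma> \<iota> Ti t = measure_pmf.prob ?Y (\<Union>s. {x. fst x = s \<and> snd (snd x)})"
    unfolding survival_def by (intro arg_cong[of _ _ "measure_pmf.prob ?Y"]) auto
  also have "\<dots> = (\<Sum>s\<in>UNIV. measure_pmf.prob ?Y {x. fst x = s \<and> snd (snd x)})"
    by (rule measure_pmf.finite_measure_finite_Union) (auto simp: disjoint_family_on_def)
  finally show ?thesis
    unfolding alive_mass_def .
qed

lemma alive_mass_0: "alive_mass P \<sigma> \<iota> Ti 0 s = (if s = \<iota> \<and> \<iota> \<notin> Ti then 1 else 0)"
  by (auto simp: alive_mass_def measure_map_pmf vimage_def)

lemma alive_mass_Suc:
  fixes P :: "'s::finite \<Rightarrow> 'a::finite \<Rightarrow> 's \<Rightarrow> real"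
  assumes mdp: "is_MDP P" and valid: "valid_strat P Mem \<sigma>"
  shows "alive_mass P \<sigma> \<iota> Ti (Suc t) s' =
    (if s' \<in> Ti then 0 else \<Sum>s\<in>UNIV. \<Sum>a\<in>UNIV. action_mass P \<sigma> \<iota> Ti t s a * P s a s')"
proof -
  let ?Y = "agent_run P \<sigma> \<iota> Ti t"
  let ?next = "\<lambda>x. map_pmf (\<lambda>y. (fst y, snd y, snd (snd x) \<and> fst y \<notin> Ti)) (agent_step P \<sigma> (fst x, fst (snd x)))"
  define f where "f s a x = (if fst x = s \<and> snd (snd x) then pmf (act_rule \<sigma> s (fst (snd x))) a else 0)"
    for s a and x :: "'s \<times> nat \<times> bool"
  have step: "measure_pmf.prob (?next x) {x. fst x = s' \<and> snd (snd x)} =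
      (if s' \<in> Ti then 0 else \<Sum>s\<in>UNIV. \<Sum>a\<in>UNIV. f s a x * P s a s')"
    if "x \<in> set_pmf ?Y" for x
  proof -
    have sum_f: "(\<Sum>s\<in>UNIV. \<Sum>a\<in>UNIV. f s a x * P s a s') = (if snd (snd x)
        then \<Sum>a\<in>UNIV. pmf (act_rule \<sigma> (fst x) (fst (snd x))) a * P (fst x) a s' else 0)"
    proof -
      have "(\<Sum>a\<in>UNIV. f s a x * P s a s') = (if s = fst x then (if snd (snd x)
          then \<Sum>a\<in>UNIV. pmf (act_rule \<sigma> (fst x) (fst (snd x))) a * P (fst x) a s' else 0) else 0)" for s
        unfolding f_def by auto
      then show ?thesis by simp
    qed
    show ?thesis
      unfolding sum_f prob_agent_step_alive[OF mdp valid mem_agent_run[OF valid that]] by auto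
  qed
  have "alive_mass P \<sigma> \<iota> Ti (Suc t) s' =
      measure_pmf.expectation ?Y (\<lambda>x. measure_pmf.prob (?next x) {x. fst x = s' \<and> snd (snd x)})"
    by (simp add: alive_mass_def prob_bind_pmf)
  also have "\<dots> = measure_pmf.expectation ?Y
      (\<lambda>x. if s' \<in> Ti then 0 else \<Sum>s\<in>UNIV. \<Sum>a\<in>UNIV. f s a x * P s a s')"
    by (intro integral_cong_AE AE_pmfI step) simp_all
  also have "\<dots> = (if s' \<in> Ti then 0 else \<Sum>s\<in>UNIV. \<Sum>a\<in>UNIV. action_mass P \<sigma> \<iota> Ti t s a * P s a s')"
  proof -
    have "integrable (measure_pmf ?Y) (f s a)" for s a
      by (rule measure_pmf.integrable_const_bound[where B=1]) (auto simp: f_def pmf_le_1)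
    then show ?thesis
      by (simp add: Bochner_Integration.integral_sum action_mass_def f_def[abs_def])
  qed
  finally show ?thesis .
qed

lemma action_mass_nonneg: "0 \<le> action_mass P \<sigma> \<iota> Ti t s a"
  unfolding action_mass_def by (rule integral_nonneg_AE) auto

lemma sum_action_mass:
  fixes \<sigma> :: "('s::finite, 'a::finite) strat"
  shows "(\<Sum>a\<in>UNIV. action_mass P \<sigma> \<iota> Ti t s a) = alive_mass P \<sigma> \<iota> Ti t s"
proof -
  let ?Y = "agent_run P \<sigma> \<iota> Ti t"
  have "(\<Sum>a\<in>UNIV. action_mass P \<sigma> \<iota> Ti t s a) = measure_pmf.expectation ?Y
      (\<lambda>x. \<Sum>a\<in>UNIV. if fst x = s \<and> snd (snd x) then pmf (act_rule \<sigma> s (fst (snd x))) a else 0)"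
    unfolding action_mass_def
    by (rule Bochner_Integration.integral_sum[symmetric],
        rule measure_pmf.integrable_const_bound[where B=1]) (auto simp: pmf_le_1)
  also have "\<dots> = measure_pmf.expectation ?Y (indicator {x. fst x = s \<and> snd (snd x)})"
    by (intro Bochner_Integration.integral_cong) (auto simp: indicator_def sum_pmf_eq_1)
  also have "\<dots> = alive_mass P \<sigma> \<iota> Ti t s"
    by (simp add: alive_mass_def)
  finally show ?thesis .
qed

lemma action_mass_le_alive_mass:
  fixes \<sigma> :: "('s::finite, 'a::finite) strat"
  shows "action_mass P \<sigma> \<iota> Ti t s a \<le> alive_mass P \<sigma> \<iota> Ti t s"
  unfolding sum_action_mass[symmetric]
  by (rule member_le_sum) (auto simp: action_mass_nonneg)

lemma action_mass_not_enabled: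
  assumes valid: "valid_strat P Mem \<sigma>" and "a \<notin> En P s"
  shows "action_mass P \<sigma> \<iota> Ti t s a = 0"
proof -
  have "a \<notin> set_pmf (act_rule \<sigma> s (fst (snd x)))" if "x \<in> set_pmf (agent_run P \<sigma> \<iota> Ti t)" for x
    using mem_agent_run[OF valid that] valid assms(2) unfolding valid_strat_def by blast
  then have "action_mass P \<sigma> \<iota> Ti t s a = measure_pmf.expectation (agent_run P \<sigma> \<iota> Ti t) (\<lambda>x. 0)"
    unfolding action_mass_def by (intro integral_cong_AE AE_pmfI) (auto simp: set_pmf_eq)
  then show ?thesis by simp
qed

text \<open>A Markov strategy plays \<open>a\<close> in \<open>s\<close> at time \<open>t\<close> with probability \<open>\<theta> (t, s, a)\<close>;
  its memory state is the current time.\<close>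

definition markov_params :: "('s::finite \<Rightarrow> 'a::finite \<Rightarrow> 's \<Rightarrow> real) \<Rightarrow> (nat \<times> 's \<times> 'a \<Rightarrow> real) set"
  where "markov_params P = {\<theta>. (\<forall>j. 0 \<le> \<theta> j \<and> \<theta> j \<le> 1) \<and> (\<forall>t s. (\<Sum>a\<in>UNIV. \<theta> (t, s, a)) = 1) \<and>
    (\<forall>t s a. a \<notin> En P s \<longrightarrow> \<theta> (t, s, a) = 0)}"

definition markov_strat :: "(nat \<times> 's \<times> 'a \<Rightarrow> real) \<Rightarrow> ('s, 'a) strat"
  where "markov_strat \<theta> = \<lparr>init_mem = return_pmf 0, act_rule = (\<lambda>s m. embed_pmf (\<lambda>a. \<theta> (m, s, a))),
    upd_rule = (\<lambda>m s a s'. return_pmf (Suc m))\<rparr>"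

fun markov_alive_mass ::
  "('s::finite \<Rightarrow> 'a::finite \<Rightarrow> 's \<Rightarrow> real) \<Rightarrow> 's \<Rightarrow> 's set \<Rightarrow> (nat \<times> 's \<times> 'a \<Rightarrow> real) \<Rightarrow> nat \<Rightarrow> 's \<Rightarrow> real"
  where
    "markov_alive_mass P \<iota> Ti \<theta> 0 s = (if s = \<iota> \<and> \<iota> \<notin> Ti then 1 else 0)"
  | "markov_alive_mass P \<iota> Ti \<theta> (Suc t) s' = (if s' \<in> Ti then 0 else
      \<Sum>s\<in>UNIV. \<Sum>a\<in>UNIV. markov_alive_mass P \<iota> Ti \<theta> t s * \<theta> (t, s, a) * P s a s')"

definition markov_survival ::
  "('s::finite \<Rightarrow> 'a::finite \<Rightarrow> 's \<Rightarrow> real) \<Rightarrow> 's \<Rightarrow> 's set \<Rightarrow> (nat \<times> 's \<times> 'a \<Rightarrow> real) \<Rightarrow> nat \<Rightarrow> real"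
  where "markov_survival P \<iota> Ti \<theta> t = (\<Sum>s\<in>UNIV. markov_alive_mass P \<iota> Ti \<theta> t s)"

lemma survival_eq_markov_survival:
  assumes mdp: "is_MDP P" and valid: "valid_strat P Mem \<sigma>"
    and action_mass: "\<And>t s a. action_mass P \<sigma> \<iota> Ti t s a = \<theta> (t, s, a) * alive_mass P \<sigma> \<iota> Ti t s"
  shows "survival P \<sigma> \<iota> Ti t = markov_survival P \<iota> Ti \<theta> t"
proof -
  have "alive_mass P \<sigma> \<iota> Ti t s = markov_alive_mass P \<iota> Ti \<theta> t s" for s
    by (induction t arbitrary: s) (simp_all add: alive_mass_0 alive_mass_Suc[OF mdp valid] action_mass mult_ac)
  then show ?thesis
    by (simp add: survival_eq_sum_alive_mass markov_survival_def)
qed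

lemma pmf_act_rule_markov_strat:
  assumes "\<theta> \<in> markov_params P"
  shows "pmf (act_rule (markov_strat \<theta>) s m) = (\<lambda>a. \<theta> (m, s, a))"
    "set_pmf (act_rule (markov_strat \<theta>) s m) = {a. \<theta> (m, s, a) \<noteq> 0}"
  using pmf_embed_pmf_finite_support[of UNIV "\<lambda>a. \<theta> (m, s, a)"] assms
  by (auto simp: markov_params_def markov_strat_def)

lemma valid_markov_strat:
  assumes "\<theta> \<in> markov_params P"
  shows "valid_strat P UNIV (markov_strat \<theta>)"
  using assms pmf_act_rule_markov_strat(2)[OF assms]
  unfolding valid_strat_def markov_params_def by (auto simp: markov_strat_def, metis)

lemma mem_agent_run_markov_strat:
  "x \<in> set_pmf (agent_run P (markov_strat \<theta>) \<iota> Ti t) \<Longrightarrow> fst (snd x) = t"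
  by (induction t arbitrary: x) (auto simp: markov_strat_def agent_step_def)

lemma survival_markov_strat:
  assumes mdp: "is_MDP P" and \<theta>: "\<theta> \<in> markov_params P"
  shows "survival P (markov_strat \<theta>) \<iota> Ti t = markov_survival P \<iota> Ti \<theta> t"
proof (rule survival_eq_markov_survival[OF mdp valid_markov_strat[OF \<theta>]])
  fix t s a
  have "action_mass P (markov_strat \<theta>) \<iota> Ti t s a = measure_pmf.expectation
      (agent_run P (markov_strat \<theta>) \<iota> Ti t) (\<lambda>x. \<theta> (t, s, a) * indicator {x. fst x = s \<and> snd (snd x)} x)"
    unfolding action_mass_def
    by (intro integral_cong_AE AE_pmfI)
      (auto simp: mem_agent_run_markov_strat pmf_act_rule_markov_strat(1)[OF \<theta>])
  then show "action_mass P (markov_strat \<theta>) \<iota> Ti t s a = \<theta> (t, s, a) * alive_mass P (markov_strat \<theta>) \<iota> Ti t s"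
    by (simp add: alive_mass_def)
qed

text \<open>Kuhn's theorem in the form needed here: conditioning on being alive in \<open>s\<close> at time \<open>t\<close>,
  the action distribution defines a Markov strategy with the same alive masses.  Where that
  event is null, any enabled action will do.\<close>

definition markov_of :: "('s::finite \<Rightarrow> 'a::finite \<Rightarrow> 's \<Rightarrow> real) \<Rightarrow> ('s, 'a) strat \<Rightarrow> 's \<Rightarrow> 's set \<Rightarrow> nat \<times> 's \<times> 'a \<Rightarrow> real"
  where "markov_of P \<sigma> \<iota> Ti = (\<lambda>(t, s, a).
    if alive_mass P \<sigma> \<iota> Ti t s = 0 then (if a = (SOME a. a \<in> En P s) then 1 else 0)
    else action_mass P \<sigma> \<iota> Ti t s a / alive_mass P \<sigma> \<iota> Ti t s)"

lemma action_mass_eq_markov_of: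
  fixes \<sigma> :: "('s::finite, 'a::finite) strat"
  shows "action_mass P \<sigma> \<iota> Ti t s a = markov_of P \<sigma> \<iota> Ti (t, s, a) * alive_mass P \<sigma> \<iota> Ti t s"
  using action_mass_le_alive_mass[of P \<sigma> \<iota> Ti t s a] action_mass_nonneg[of P \<sigma> \<iota> Ti t s a]
  by (auto simp: markov_of_def)

lemma markov_of_in_markov_params:
  fixes \<sigma> :: "('s::finite, 'a::finite) strat"
  assumes mdp: "is_MDP P" and valid: "valid_strat P Mem \<sigma>"
  shows "markov_of P \<sigma> \<iota> Ti \<in> markov_params P"
  unfolding markov_params_def
proof (intro CollectI conjI allI impI)
  fix j :: "nat \<times> 's \<times> 'a"
  obtain t s a where j: "j = (t, s, a)" by (cases j) auto
  have "0 \<le> alive_mass P \<sigma> \<iota> Ti t s"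
    by (simp add: alive_mass_def)
  then show "0 \<le> markov_of P \<sigma> \<iota> Ti j" "markov_of P \<sigma> \<iota> Ti j \<le> 1"
    using action_mass_nonneg[of P \<sigma> \<iota> Ti t s a] action_mass_le_alive_mass[of P \<sigma> \<iota> Ti t s a]
    by (auto simp: markov_of_def j divide_le_eq_1)
next
  fix t s
  show "(\<Sum>a\<in>UNIV. markov_of P \<sigma> \<iota> Ti (t, s, a)) = 1"
  proof (cases "alive_mass P \<sigma> \<iota> Ti t s = 0")
    case False
    then show ?thesis
      by (simp add: markov_of_def sum_divide_distrib[symmetric] sum_action_mass)
  qed (simp add: markov_of_def)
next
  fix t s a
  assume "a \<notin> En P s"
  then show "markov_of P \<sigma> \<iota> Ti (t, s, a) = 0"
    using some_action_enabled[OF mdp, of s] action_mass_not_enabled[OF valid]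
    by (auto simp: markov_of_def)
qed

lemma markov_realises_survival:
  fixes P :: "'s::finite \<Rightarrow> 'a::finite \<Rightarrow> 's \<Rightarrow> real"
  assumes mdp: "is_MDP P" and valid: "valid_strat P Mem \<sigma>"
  shows "\<exists>\<theta>\<in>markov_params P. \<forall>t. survival P \<sigma> \<iota> Ti t = markov_survival P \<iota> Ti \<theta> t"
proof
  show "markov_of P \<sigma> \<iota> Ti \<in> markov_params P"
    by (rule markov_of_in_markov_params[OF assms])
  show "\<forall>t. survival P \<sigma> \<iota> Ti t = markov_survival P \<iota> Ti (markov_of P \<sigma> \<iota> Ti) t"
    using survival_eq_markov_survival[OF mdp valid action_mass_eq_markov_of] by blast
qed

lemma continuous_markov_survival: "continuous_on S (\<lambda>\<theta>. markov_survival P \<iota> Ti \<theta> t)"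
proof -
  have cont: "continuous_on UNIV (\<lambda>\<theta>. markov_alive_mass P \<iota> Ti \<theta> t s)" for s
  proof (induction t arbitrary: s)
    case (Suc t)
    show ?case
    proof (cases "s \<in> Ti")
      case False
      then show ?thesis
        by (simp only: markov_alive_mass.simps if_False, intro continuous_on_sum continuous_on_mult
            Suc continuous_on_product_coordinates continuous_on_const)
    qed simp
  qed simp
  show ?thesis
    unfolding markov_survival_def by (intro continuous_on_sum continuous_on_subset[OF cont]) auto
qed

lemma compact_markov_params:
  fixes P :: "'s::finite \<Rightarrow> 'a::finite \<Rightarrow> 's \<Rightarrow> real"
  shows "compact (markov_params P)"
proof -
  have "markov_params P = {\<theta>. \<forall>j. \<theta> j \<in> {0..1}} \<inter>
      ({\<theta>. \<forall>t s. (\<Sum>a\<in>UNIV. \<theta> (t, s, a)) = 1} \<inter> {\<theta>. \<forall>t s a. a \<notin> En P s \<longrightarrow> \<theta> (t, s, a) = 0})"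
    unfolding markov_params_def by auto
  moreover have "closed {\<theta> :: nat \<times> 's \<times> 'a \<Rightarrow> real. \<forall>t s. (\<Sum>a\<in>UNIV. \<theta> (t, s, a)) = 1}"
    by (intro closed_Collect_all closed_Collect_eq_const continuous_on_sum continuous_on_product_coordinates)
  moreover have "closed {\<theta> :: nat \<times> 's \<times> 'a \<Rightarrow> real. \<forall>t s a. a \<notin> En P s \<longrightarrow> \<theta> (t, s, a) = 0}"
    by (intro closed_Collect_all closed_Collect_imp closed_Collect_eq_const continuous_on_product_coordinates) auto
  ultimately show ?thesis
    by (simp only:) (intro compact_Int_closed closed_Int compact_funs_into compact_Icc)
qed

lemma markov_params_nonempty:
  assumes "is_MDP P"
  shows "markov_params P \<noteq> {}"
proof -
  have "(\<lambda>(t, s, a). if a = (SOME a. a \<in> En P s) then 1 else 0) \<in> markov_params P"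
    unfolding markov_params_def using some_action_enabled[OF assms] by auto
  then show ?thesis by blast
qed

section \<open>Strategies with bounded memory\<close>

text \<open>A strategy with memory states \<open>{..<n}\<close> is encoded as a single real vector whose
  coordinates are the probabilities of its three rules, so that all such strategies form a
  compact set.\<close>

type_synonym ('s, 'a) finmem_param = "(nat + 's \<times> nat \<times> 'a) + nat \<times> 's \<times> 'a \<times> 's \<times> nat \<Rightarrow> real"

definition param_init :: "('s, 'a) finmem_param \<Rightarrow> nat \<Rightarrow> real"
  where "param_init \<theta> m = \<theta> (Inl (Inl m))"

definition param_act :: "('s, 'a) finmem_param \<Rightarrow> 's \<Rightarrow> nat \<Rightarrow> 'a \<Rightarrow> real"
  where "param_act \<theta> s m a = \<theta> (Inl (Inr (s, m, a)))"

definition param_upd :: "('s, 'a) finmem_param \<Rightarrow> nat \<Rightarrow> 's \<Rightarrow> 'a \<Rightarrow> 's \<Rightarrow> nat \<Rightarrow> real"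
  where "param_upd \<theta> m s a s' m' = \<theta> (Inr (m, s, a, s', m'))"

definition finmem_params :: "('s::finite \<Rightarrow> 'a::finite \<Rightarrow> 's \<Rightarrow> real) \<Rightarrow> nat \<Rightarrow> ('s, 'a) finmem_param set"
  where "finmem_params P n = {\<theta>. (\<forall>j. 0 \<le> \<theta> j \<and> \<theta> j \<le> 1) \<and>
    (\<forall>m. n \<le> m \<longrightarrow> param_init \<theta> m = 0) \<and> (\<Sum>m<n. param_init \<theta> m) = 1 \<and>
    (\<forall>s m. (\<Sum>a\<in>UNIV. param_act \<theta> s m a) = 1) \<and> (\<forall>s m a. a \<notin> En P s \<longrightarrow> param_act \<theta> s m a = 0) \<and>
    (\<forall>m s a s'. (\<Sum>m'<n. param_upd \<theta> m s a s' m') = 1) \<and>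
    (\<forall>m s a s' m'. n \<le> m' \<longrightarrow> param_upd \<theta> m s a s' m' = 0)}"

definition finmem_strat :: "('s, 'a) finmem_param \<Rightarrow> ('s, 'a) strat"
  where "finmem_strat \<theta> = \<lparr>init_mem = embed_pmf (param_init \<theta>), act_rule = (\<lambda>s m. embed_pmf (param_act \<theta> s m)),
    upd_rule = (\<lambda>m s a s'. embed_pmf (param_upd \<theta> m s a s'))\<rparr>"

fun finmem_alive_mass ::
  "('s::finite \<Rightarrow> 'a::finite \<Rightarrow> 's \<Rightarrow> real) \<Rightarrow> 's \<Rightarrow> 's set \<Rightarrow> nat \<Rightarrow> ('s, 'a) finmem_param \<Rightarrow> nat \<Rightarrow> 's \<Rightarrow> nat \<Rightarrow> real"
  where
    "finmem_alive_mass P \<iota> Ti n \<theta> 0 s m = (if s = \<iota> \<and> \<iota> \<notin> Ti then param_init \<theta> m else 0)"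
  | "finmem_alive_mass P \<iota> Ti n \<theta> (Suc t) s' m' = (if s' \<in> Ti then 0 else
      \<Sum>s\<in>UNIV. \<Sum>m<n. \<Sum>a\<in>UNIV. finmem_alive_mass P \<iota> Ti n \<theta> t s m * param_act \<theta> s m a * P s a s' *
        param_upd \<theta> m s a s' m')"

definition finmem_survival ::
  "('s::finite \<Rightarrow> 'a::finite \<Rightarrow> 's \<Rightarrow> real) \<Rightarrow> 's \<Rightarrow> 's set \<Rightarrow> nat \<Rightarrow> ('s, 'a) finmem_param \<Rightarrow> nat \<Rightarrow> real"
  where "finmem_survival P \<iota> Ti n \<theta> t = (\<Sum>s\<in>UNIV. \<Sum>m<n. finmem_alive_mass P \<iota> Ti n \<theta> t s m)"

lemma pmf_finmem_strat:
  fixes P :: "'s::finite \<Rightarrow> 'a::finite \<Rightarrow> 's \<Rightarrow> real"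
  assumes "\<theta> \<in> finmem_params P n"
  shows "pmf (init_mem (finmem_strat \<theta>)) = param_init \<theta>"
    and "set_pmf (init_mem (finmem_strat \<theta>)) \<subseteq> {..<n}"
    and "pmf (act_rule (finmem_strat \<theta>) s m) = param_act \<theta> s m"
    and "set_pmf (act_rule (finmem_strat \<theta>) s m) \<subseteq> En P s"
    and "pmf (upd_rule (finmem_strat \<theta>) m s a s') = param_upd \<theta> m s a s'"
    and "set_pmf (upd_rule (finmem_strat \<theta>) m s a s') \<subseteq> {..<n}"
proof -
  have nonneg: "0 \<le> param_init \<theta> x" "0 \<le> param_act \<theta> s m b" "0 \<le> param_upd \<theta> m s a s' x" for x b
    using assms by (auto simp: finmem_params_def param_init_def param_act_def param_upd_def)
  note init = pmf_embed_pmf_finite_support[of "{..<n}" "param_init \<theta>"]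
  note act = pmf_embed_pmf_finite_support[of UNIV "param_act \<theta> s m"]
  note upd = pmf_embed_pmf_finite_support[of "{..<n}" "param_upd \<theta> m s a s'"]
  show "pmf (init_mem (finmem_strat \<theta>)) = param_init \<theta>"
    and "set_pmf (init_mem (finmem_strat \<theta>)) \<subseteq> {..<n}"
    using init nonneg assms by (auto simp: finmem_strat_def finmem_params_def not_less)
  show "pmf (act_rule (finmem_strat \<theta>) s m) = param_act \<theta> s m"
    and "set_pmf (act_rule (finmem_strat \<theta>) s m) \<subseteq> En P s"
    using act nonneg assms by (auto simp: finmem_strat_def finmem_params_def) meson
  show "pmf (upd_rule (finmem_strat \<theta>) m s a s') = param_upd \<theta> m s a s'"
    and "set_pmf (upd_rule (finmem_strat \<theta>) m s a s') \<subseteq> {..<n}"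
    using upd nonneg assms by (auto simp: finmem_strat_def finmem_params_def) (meson not_less)
qed

lemma valid_finmem_strat:
  fixes P :: "'s::finite \<Rightarrow> 'a::finite \<Rightarrow> 's \<Rightarrow> real"
  assumes "\<theta> \<in> finmem_params P n"
  shows "valid_strat P {..<n} (finmem_strat \<theta>)"
  using pmf_finmem_strat[OF assms] unfolding valid_strat_def by auto

lemma pmf_agent_step_finmem_strat:
  fixes P :: "'s::finite \<Rightarrow> 'a::finite \<Rightarrow> 's \<Rightarrow> real"
  assumes mdp: "is_MDP P" and \<theta>: "\<theta> \<in> finmem_params P n"
  shows "pmf (agent_step P (finmem_strat \<theta>) (s, m)) (s', m') =
    (\<Sum>a\<in>UNIV. param_act \<theta> s m a * P s a s' * param_upd \<theta> m s a s' m')"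
  unfolding pmf_agent_step pmf_finmem_strat[OF \<theta>]
proof (rule sum.cong)
  fix a
  show "param_act \<theta> s m a * pmf (trans_pmf P s a) s' * param_upd \<theta> m s a s' m' =
      param_act \<theta> s m a * P s a s' * param_upd \<theta> m s a s' m'"
  proof (cases "a \<in> En P s")
    case False
    then have "param_act \<theta> s m a = 0"
      using \<theta> unfolding finmem_params_def by auto
    then show ?thesis by simp
  qed (simp add: pmf_trans_pmf[OF mdp])
qed simp

lemma pmf_agent_run_finmem_strat:
  fixes P :: "'s::finite \<Rightarrow> 'a::finite \<Rightarrow> 's \<Rightarrow> real"
  assumes mdp: "is_MDP P" and \<theta>: "\<theta> \<in> finmem_params P n"
  shows "pmf (agent_run P (finmem_strat \<theta>) \<iota> Ti t) (s, m, True) = finmem_alive_mass P \<iota> Ti n \<theta> t s m"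
proof (induction t arbitrary: s m)
  case 0
  have "(\<lambda>m'. (\<iota>, m', \<iota> \<notin> Ti)) -` {(s, m, True)} = (if s = \<iota> \<and> \<iota> \<notin> Ti then {m} else {})"
    by auto
  then show ?case
    by (simp add: pmf_map measure_pmf_single pmf_finmem_strat[OF \<theta>])
next
  case (Suc t)
  let ?Y = "agent_run P (finmem_strat \<theta>) \<iota> Ti t"
  have "pmf (agent_run P (finmem_strat \<theta>) \<iota> Ti (Suc t)) (s, m, True) = measure_pmf.expectation ?Y
      (\<lambda>x. if snd (snd x) \<and> s \<notin> Ti then pmf (agent_step P (finmem_strat \<theta>) (fst x, fst (snd x))) (s, m) else 0)"
    by (rule pmf_agent_run_Suc_alive)
  also have "\<dots> = (\<Sum>x\<in>UNIV \<times> {..<n} \<times> UNIV. (if snd (snd x) \<and> s \<notin> Ti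
      then pmf (agent_step P (finmem_strat \<theta>) (fst x, fst (snd x))) (s, m) else 0) * pmf ?Y x)"
  proof (rule integral_measure_pmf_real)
    fix x
    assume "x \<in> set_pmf ?Y"
    then have "fst (snd x) \<in> {..<n}"
      using mem_agent_run[OF valid_finmem_strat[OF \<theta>]] by blast
    then show "x \<in> UNIV \<times> {..<n} \<times> UNIV"
      by (cases x) auto
  qed simp
  also have "\<dots> = (\<Sum>s0\<in>UNIV. \<Sum>m0<n. \<Sum>b\<in>UNIV. (if b \<and> s \<notin> Ti
      then pmf (agent_step P (finmem_strat \<theta>) (s0, m0)) (s, m) else 0) * pmf ?Y (s0, m0, b))"
    by (simp add: sum.cartesian_product split_def)
  also have "\<dots> = (if s \<in> Ti then 0 else \<Sum>s0\<in>UNIV. \<Sum>m0<n.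
      pmf (agent_step P (finmem_strat \<theta>) (s0, m0)) (s, m) * finmem_alive_mass P \<iota> Ti n \<theta> t s0 m0)"
    by (simp add: UNIV_bool Suc)
  also have "\<dots> = finmem_alive_mass P \<iota> Ti n \<theta> (Suc t) s m"
    by (simp add: pmf_agent_step_finmem_strat[OF mdp \<theta>] sum_distrib_left sum_distrib_right mult_ac)
  finally show ?case .
qed

lemma survival_finmem_strat:
  fixes P :: "'s::finite \<Rightarrow> 'a::finite \<Rightarrow> 's \<Rightarrow> real"
  assumes mdp: "is_MDP P" and \<theta>: "\<theta> \<in> finmem_params P n"
  shows "survival P (finmem_strat \<theta>) \<iota> Ti t = finmem_survival P \<iota> Ti n \<theta> t"
proof -
  let ?Y = "agent_run P (finmem_strat \<theta>) \<iota> Ti t"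
  have "{x. snd (snd x)} \<inter> set_pmf ?Y = (UNIV \<times> {..<n} \<times> {True}) \<inter> set_pmf ?Y"
    using mem_agent_run[OF valid_finmem_strat[OF \<theta>]] by fastforce
  then have "survival P (finmem_strat \<theta>) \<iota> Ti t = measure_pmf.prob ?Y (UNIV \<times> {..<n} \<times> {True})"
    unfolding survival_def by (metis measure_Int_set_pmf)
  also have "\<dots> = (\<Sum>x\<in>UNIV \<times> {..<n} \<times> {True}. pmf ?Y x)"
    by (simp add: measure_measure_pmf_finite)
  also have "\<dots> = finmem_survival P \<iota> Ti n \<theta> t"
    by (simp add: sum.cartesian_product' finmem_survival_def pmf_agent_run_finmem_strat[OF mdp \<theta>])
  finally show ?thesis .
qed

lemma survival_rename_memory:
  fixes P :: "'s::finite \<Rightarrow> 'a \<Rightarrow> 's \<Rightarrow> real"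
  assumes valid: "valid_strat P Mem \<sigma>"
    and init: "init_mem \<sigma>' = map_pmf h (init_mem \<sigma>)"
    and act: "\<And>s m. m \<in> Mem \<Longrightarrow> act_rule \<sigma>' s (h m) = act_rule \<sigma> s m"
    and upd: "\<And>m s a s'. m \<in> Mem \<Longrightarrow> upd_rule \<sigma>' (h m) s a s' = map_pmf h (upd_rule \<sigma> m s a s')"
  shows "survival P \<sigma>' \<iota> Ti t = survival P \<sigma> \<iota> Ti t"
proof -
  define R where "R x = (fst x, h (fst (snd x)), snd (snd x))" for x :: "'s \<times> nat \<times> bool"
  have step: "agent_step P \<sigma>' (s, h m) = map_pmf (\<lambda>y. (fst y, h (snd y))) (agent_step P \<sigma> (s, m))"
    if "m \<in> Mem" for s m
    using that by (simp add: agent_step_def act upd map_bind_pmf bind_map_pmf)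
  have "agent_run P \<sigma>' \<iota> Ti t = map_pmf R (agent_run P \<sigma> \<iota> Ti t)"
  proof (induction t)
    case 0
    show ?case by (simp add: init map_pmf_comp R_def)
  next
    case (Suc t)
    show ?case
      unfolding agent_run.simps Suc bind_map_pmf map_bind_pmf
      by (intro bind_pmf_cong refl) (auto simp: R_def step map_pmf_comp dest: mem_agent_run[OF valid])
  qed
  then show ?thesis
    by (simp add: survival_def measure_map_pmf vimage_def R_def)
qed

definition finmem_encode :: "('s, 'a) strat \<Rightarrow> (nat \<Rightarrow> nat) \<Rightarrow> (nat \<Rightarrow> nat) \<Rightarrow> ('s, 'a) finmem_param"
  where "finmem_encode \<sigma> h g = (\<lambda>j. case j of
      Inl (Inl m) \<Rightarrow> pmf (map_pmf h (init_mem \<sigma>)) m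
    | Inl (Inr (s, m, a)) \<Rightarrow> pmf (act_rule \<sigma> s (g m)) a
    | Inr (m, s, a, s', m') \<Rightarrow> pmf (map_pmf h (upd_rule \<sigma> (g m) s a s')) m')"

lemma finmem_strat_finmem_encode:
  "finmem_strat (finmem_encode \<sigma> h g) = \<lparr>init_mem = map_pmf h (init_mem \<sigma>),
     act_rule = (\<lambda>s m. act_rule \<sigma> s (g m)), upd_rule = (\<lambda>m s a s'. map_pmf h (upd_rule \<sigma> (g m) s a s'))\<rparr>"
proof -
  have "param_init (finmem_encode \<sigma> h g) = pmf (map_pmf h (init_mem \<sigma>))"
    "param_act (finmem_encode \<sigma> h g) s m = pmf (act_rule \<sigma> s (g m))"
    "param_upd (finmem_encode \<sigma> h g) m s a s' = pmf (map_pmf h (upd_rule \<sigma> (g m) s a s'))" for s m a s'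
    by (simp_all add: fun_eq_iff param_init_def param_act_def param_upd_def finmem_encode_def)
  then show ?thesis
    by (simp add: finmem_strat_def embed_pmf_pmf)
qed

lemma finmem_encode_in_finmem_params:
  fixes P :: "'s::finite \<Rightarrow> 'a::finite \<Rightarrow> 's \<Rightarrow> real"
  assumes valid: "valid_strat P Mem \<sigma>" and h: "h ` Mem \<subseteq> {..<n}" and g: "\<And>m. g m \<in> Mem"
  shows "finmem_encode \<sigma> h g \<in> finmem_params P n"
proof -
  have init: "set_pmf (map_pmf h (init_mem \<sigma>)) \<subseteq> {..<n}"
    using valid h unfolding valid_strat_def by auto
  have act: "set_pmf (act_rule \<sigma> s (g m)) \<subseteq> En P s" for s m
    using valid g unfolding valid_strat_def by auto
  have upd: "set_pmf (map_pmf h (upd_rule \<sigma> (g m) s a s')) \<subseteq> {..<n}" for m s a s'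
  proof -
    have "set_pmf (upd_rule \<sigma> (g m) s a s') \<subseteq> Mem"
      using valid g unfolding valid_strat_def by blast
    then show ?thesis using h by auto
  qed
  show ?thesis
    unfolding finmem_params_def param_init_def param_act_def param_upd_def
  proof (intro CollectI conjI allI impI)
    fix j
    have "0 \<le> finmem_encode \<sigma> h g j \<and> finmem_encode \<sigma> h g j \<le> 1"
    proof (cases j)
      case (Inl j')
      then show ?thesis
        by (cases j') (auto simp: finmem_encode_def pmf_le_1 split: prod.split)
    qed (auto simp: finmem_encode_def pmf_le_1 split: prod.split)
    then show "0 \<le> finmem_encode \<sigma> h g j" "finmem_encode \<sigma> h g j \<le> 1"
      by auto
  next
    show "finmem_encode \<sigma> h g (Inl (Inl m)) = 0" if "n \<le> m" for m
      using init that by (auto simp: finmem_encode_def pmf_eq_0_set_pmf)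
    show "(\<Sum>m<n. finmem_encode \<sigma> h g (Inl (Inl m))) = 1"
      using sum_pmf_eq_1[OF _ init] by (simp add: finmem_encode_def)
    show "(\<Sum>a\<in>UNIV. finmem_encode \<sigma> h g (Inl (Inr (s, m, a)))) = 1" for s m
      by (simp add: finmem_encode_def sum_pmf_eq_1)
    show "finmem_encode \<sigma> h g (Inl (Inr (s, m, a))) = 0" if "a \<notin> En P s" for s m a
      using act that by (auto simp: finmem_encode_def pmf_eq_0_set_pmf)
    show "(\<Sum>m'<n. finmem_encode \<sigma> h g (Inr (m, s, a, s', m'))) = 1" for m s a s'
      using sum_pmf_eq_1[OF _ upd] by (simp add: finmem_encode_def)
    show "finmem_encode \<sigma> h g (Inr (m, s, a, s', m')) = 0" if "n \<le> m'" for m s a s' m'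
      using upd[of m s a s'] that by (auto simp: finmem_encode_def pmf_eq_0_set_pmf)
  qed
qed

lemma finmem_realises_survival:
  fixes P :: "'s::finite \<Rightarrow> 'a::finite \<Rightarrow> 's \<Rightarrow> real"
  assumes mdp: "is_MDP P" and valid: "valid_strat P Mem \<sigma>" and "finite Mem" and "card Mem \<le> n"
  shows "\<exists>\<theta>\<in>finmem_params P n. \<forall>t. survival P \<sigma> \<iota> Ti t = finmem_survival P \<iota> Ti n \<theta> t"
proof -
  obtain h where h: "bij_betw h Mem {0..<card Mem}"
    using ex_bij_betw_finite_nat[OF \<open>finite Mem\<close>] by blast
  then have h_inj: "inj_on h Mem" and h_Mem: "h ` Mem \<subseteq> {..<n}"
    using \<open>card Mem \<le> n\<close> by (auto simp: bij_betw_def)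
  obtain m0 where m0: "m0 \<in> Mem"
    using valid set_pmf_not_empty[of "init_mem \<sigma>"] unfolding valid_strat_def by blast
  define g where "g m = (if m \<in> h ` Mem then the_inv_into Mem h m else m0)" for m
  have g_h: "g (h m) = m" if "m \<in> Mem" for m
    using that h_inj by (simp add: g_def the_inv_into_f_f)
  have g_Mem: "g m \<in> Mem" for m
    using m0 h_inj by (auto simp: g_def the_inv_into_into)
  define \<theta> where "\<theta> = finmem_encode \<sigma> h g"
  have \<theta>: "\<theta> \<in> finmem_params P n"
    unfolding \<theta>_def by (rule finmem_encode_in_finmem_params[OF valid h_Mem g_Mem])
  have "survival P \<sigma> \<iota> Ti t = survival P (finmem_strat \<theta>) \<iota> Ti t" for t
    unfolding \<theta>_def
    by (rule survival_rename_memory[OF valid, symmetric]) (auto simp: finmem_strat_finmem_encode g_h)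
  then show ?thesis
    using \<theta> survival_finmem_strat[OF mdp \<theta>] by auto
qed

lemma continuous_finmem_survival: "continuous_on S (\<lambda>\<theta>. finmem_survival P \<iota> Ti n \<theta> t)"
proof -
  have cont: "continuous_on UNIV (\<lambda>\<theta>. finmem_alive_mass P \<iota> Ti n \<theta> t s m)" for s m
  proof (induction t arbitrary: s m)
    case 0
    show ?case
    proof (cases "s = \<iota> \<and> \<iota> \<notin> Ti")
      case True
      then show ?thesis
        by (simp add: param_init_def continuous_on_product_coordinates)
    next
      case False
      then show ?thesis
        by (simp only: finmem_alive_mass.simps if_False continuous_on_const)
    qed
  next
    case (Suc t)
    show ?case
    proof (cases "s \<in> Ti")
      case False
      then show ?thesis
        by (simp only: finmem_alive_mass.simps if_False param_act_def param_upd_def,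
            intro continuous_on_sum continuous_on_mult Suc continuous_on_product_coordinates continuous_on_const)
    qed simp
  qed
  show ?thesis
    unfolding finmem_survival_def by (intro continuous_on_sum continuous_on_subset[OF cont]) auto
qed

lemma compact_finmem_params:
  fixes P :: "'s::finite \<Rightarrow> 'a::finite \<Rightarrow> 's \<Rightarrow> real"
  shows "compact (finmem_params P n)"
proof -
  have "finmem_params P n = {\<theta>. \<forall>j. \<theta> j \<in> {0..1}} \<inter>
     ({\<theta>. \<forall>m. n \<le> m \<longrightarrow> \<theta> (Inl (Inl m)) = 0} \<inter> {\<theta>. (\<Sum>m<n. \<theta> (Inl (Inl m))) = 1} \<inter>
      {\<theta>. \<forall>s m. (\<Sum>a\<in>UNIV. \<theta> (Inl (Inr (s, m, a)))) = 1} \<inter>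
      {\<theta>. \<forall>s m a. a \<notin> En P s \<longrightarrow> \<theta> (Inl (Inr (s, m, a))) = 0} \<inter>
      {\<theta>. \<forall>m s a s'. (\<Sum>m'<n. \<theta> (Inr (m, s, a, s', m'))) = 1} \<inter>
      {\<theta>. \<forall>m s a s' m'. n \<le> m' \<longrightarrow> \<theta> (Inr (m, s, a, s', m')) = 0})"
    unfolding finmem_params_def param_init_def param_act_def param_upd_def by auto
  moreover have "closed ({\<theta> :: ('s, 'a) finmem_param. \<forall>m. n \<le> m \<longrightarrow> \<theta> (Inl (Inl m)) = 0} \<inter>
      {\<theta>. (\<Sum>m<n. \<theta> (Inl (Inl m))) = 1} \<inter>
      {\<theta>. \<forall>s m. (\<Sum>a\<in>UNIV. \<theta> (Inl (Inr (s, m, a)))) = 1} \<inter>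
      {\<theta>. \<forall>s m a. a \<notin> En P s \<longrightarrow> \<theta> (Inl (Inr (s, m, a))) = 0} \<inter>
      {\<theta>. \<forall>m s a s'. (\<Sum>m'<n. \<theta> (Inr (m, s, a, s', m'))) = 1} \<inter>
      {\<theta>. \<forall>m s a s' m'. n \<le> m' \<longrightarrow> \<theta> (Inr (m, s, a, s', m')) = 0})"
    by (intro closed_Int closed_Collect_all closed_Collect_imp closed_Collect_eq_const continuous_on_sum
        continuous_on_product_coordinates) auto
  ultimately show ?thesis
    by (simp only:) (intro compact_Int_closed compact_funs_into compact_Icc)
qed

lemma finmem_params_nonempty:
  fixes P :: "'s::finite \<Rightarrow> 'a::finite \<Rightarrow> 's \<Rightarrow> real"
  assumes mdp: "is_MDP P" and n: "1 \<le> n"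
  shows "finmem_params P n \<noteq> {}"
proof -
  define \<theta> :: "('s, 'a) finmem_param" where "\<theta> j = (case j of
      Inl (Inl m) \<Rightarrow> (if m = 0 then 1 else 0)
    | Inl (Inr (s, m, a)) \<Rightarrow> (if a = (SOME a. a \<in> En P s) then 1 else 0)
    | Inr (m, s, a, s', m') \<Rightarrow> (if m' = 0 then 1 else 0))" for j
  have "\<theta> \<in> finmem_params P n"
    unfolding finmem_params_def using n some_action_enabled[OF mdp]
    by (auto simp: \<theta>_def param_init_def param_act_def param_upd_def split: sum.splits prod.splits)
  then show ?thesis by blast
qed

section \<open>Optimal profiles\<close>

lemma optimal_profile_exists:
  fixes P :: "'s::finite \<Rightarrow> 'a::finite \<Rightarrow> 's \<Rightarrow> real"
  assumes mdp: "is_MDP P"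
  shows "\<exists>\<pi>. in_Pi P k \<pi> \<and> exp_MHit P k iota T \<pi> = (INF \<pi>'\<in>{\<pi>'. in_Pi P k \<pi>'}. exp_MHit P k iota T \<pi>')"
  unfolding in_Pi_def
proof (rule optimal_profile_from_parametrisation[where \<Theta> = "markov_params P"
      and \<phi> = "\<lambda>i. markov_survival P (iota i) (T i)"])
  show "compact (markov_params P)"
    by (rule compact_markov_params)
  show "markov_params P \<noteq> {}"
    by (rule markov_params_nonempty[OF mdp])
  show "continuous_on (markov_params P) (\<lambda>\<theta>. markov_survival P (iota i) (T i) \<theta> t)" for i t
    by (rule continuous_markov_survival)
  show "\<exists>\<theta>\<in>markov_params P. \<forall>t. survival P \<sigma> (iota i) (T i) t = markov_survival P (iota i) (T i) \<theta> t"
    if "\<exists>Mem. valid_strat P Mem \<sigma>" for i \<sigma>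
    using that markov_realises_survival[OF mdp] by blast
  show "\<exists>\<sigma>. (\<exists>Mem. valid_strat P Mem \<sigma>) \<and> (\<forall>t. survival P \<sigma> (iota i) (T i) t = markov_survival P (iota i) (T i) \<theta> t)"
    if "\<theta> \<in> markov_params P" for i \<theta>
    using valid_markov_strat[OF that] survival_markov_strat[OF mdp that] by blast
qed

lemma optimal_finite_memory_profile_exists:
  fixes P :: "'s::finite \<Rightarrow> 'a::finite \<Rightarrow> 's \<Rightarrow> real"
  assumes mdp: "is_MDP P" and n: "1 \<le> n"
  shows "\<exists>\<pi>. in_Pi_n P k n \<pi> \<and> exp_MHit P k iota T \<pi> = (INF \<pi>'\<in>{\<pi>'. in_Pi_n P k n \<pi>'}. exp_MHit P k iota T \<pi>')"
  unfolding in_Pi_n_def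
proof (rule optimal_profile_from_parametrisation[where \<Theta> = "finmem_params P n"
      and \<phi> = "\<lambda>i. finmem_survival P (iota i) (T i) n"])
  show "compact (finmem_params P n)"
    by (rule compact_finmem_params)
  show "finmem_params P n \<noteq> {}"
    by (rule finmem_params_nonempty[OF mdp n])
  show "continuous_on (finmem_params P n) (\<lambda>\<theta>. finmem_survival P (iota i) (T i) n \<theta> t)" for i t
    by (rule continuous_finmem_survival)
  show "\<exists>\<theta>\<in>finmem_params P n. \<forall>t. survival P \<sigma> (iota i) (T i) t = finmem_survival P (iota i) (T i) n \<theta> t"
    if "\<exists>Mem. finite Mem \<and> card Mem \<le> n \<and> valid_strat P Mem \<sigma>" for i \<sigma>
    using that finmem_realises_survival[OF mdp] by blast
  show "\<exists>\<sigma>. (\<exists>Mem. finite Mem \<and> card Mem \<le> n \<and> valid_strat P Mem \<sigma>) \<and>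
      (\<forall>t. survival P \<sigma> (iota i) (T i) t = finmem_survival P (iota i) (T i) n \<theta> t)"
    if "\<theta> \<in> finmem_params P n" for i \<theta>
    using valid_finmem_strat[OF that] survival_finmem_strat[OF mdp that]
    by (metis card_lessThan finite_lessThan order_refl)
qed

theorem mainTheorem3:
  fixes P :: "'s::finite \<Rightarrow> 'a::finite \<Rightarrow> 's \<Rightarrow> real"
    and k :: nat and iota :: "nat \<Rightarrow> 's" and T :: "nat \<Rightarrow> 's set"
  assumes "is_MSSP P k iota T"
  shows "(\<exists>\<pi>. in_Pi P k \<pi> \<and>
            exp_MHit P k iota T \<pi> = (INF \<pi>'\<in>{\<pi>'. in_Pi P k \<pi>'}. exp_MHit P k iota T \<pi>'))
       \<and> (\<forall>n\<ge>1. \<exists>\<pi>. in_Pi_n P k n \<pi> \<and>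
            exp_MHit P k iota T \<pi> = (INF \<pi>'\<in>{\<pi>'. in_Pi_n P k n \<pi>'}. exp_MHit P k iota T \<pi>'))"
proof -
  have "is_MDP P"
    using assms unfolding is_MSSP_def by auto
  then show ?thesis
    using optimal_profile_exists optimal_finite_memory_profile_exists by blast
qed

end
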